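(* Let $G$ be a free abelian group, let $D$ be a subgroup of $G$, let $L\in{\mathrm{End}}_{\mathbb{Z}}(G)$ satisfy $L(D)\subseteq D$, and let $k$ be a positive integer such that the restriction of $L$ to $L^k(D)$ is a monomorphism $L^k(D)\to D$. Let $\overline{L}:G/D\to G/D$ be the induced endomorphism $g+D\mapsto L(g)+D$. Then for every finitely generated subgroup $X\subseteq G$, writing $\overline{X}:=(X+D)/D$, we have $$\eta_L(X)\leq \eta_{\overline{L}}(\overline{X})+k.$$
   Context: For an abelian group $M$, an endomorphism $f$ of $M$ and a finitely generated subgroup $Y\subseteq M$, $\eta_f(Y)$ denotes the least non-negative integer $k$ such that for every $m\geq k$ the restriction $f|_{f^m(Y)}:f^m(Y)\to f^{m+1}(Y)$ is an isomorphism (this integer exists by Fitting's Lemma over the noetherian ring $\mathbb{Z}$). *)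

theory Defs
  imports "HOL-Algebra.Free_Abelian_Groups"
begin

definition fg_subgroup :: "('a, 'b) monoid_scheme \<Rightarrow> 'a set \<Rightarrow> bool" where
  "fg_subgroup M Y \<longleftrightarrow> subgroup Y M \<and> (\<exists>F. finite F \<and> F \<subseteq> carrier M \<and> Y = generate M F)"

text \<open>eta_f(Y): least k such that for all m >= k the restriction of f to f^m(Y)
  is an isomorphism f^m(Y) -> f^(m+1)(Y) (f being a group endomorphism, this is
  bijectivity of the restriction).\<close>
definition eta :: "('a \<Rightarrow> 'a) \<Rightarrow> 'a set \<Rightarrow> nat" where
  "eta f Y = (LEAST k. \<forall>m\<ge>k. bij_betw f ((f ^^ m) ` Y) ((f ^^ Suc m) ` Y))"

end

theory Submission
  imports Defs "HOL-Computational_Algebra.Group_Closure"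
begin

text \<open>Put K m = {x \<in> X. L^m x \<in> D}, an ascending chain of subgroups of X. Two cosets
  D + L^m x and D + L^m y have the same image under \<open>Lbar\<close> iff L^(m+1) (x - y) \<in> D, so
  \<open>Lbar\<close> is injective on \<open>Lbar^m (X/D)\<close> iff K (m+1) \<subseteq> K m. Since X lies in a free abelian
  group of finite rank, the chain K is eventually stationary; hence n = \<open>\<eta>\<close>(Lbar, X/D) exists
  and K m = K n for all m \<ge> n. Now let m \<ge> n + k and L^(m+1) z = 0 with z \<in> X. Then
  z \<in> K (m+1) = K n, so L^(m-k) z \<in> D and L^m z \<in> L^k(D), where L is injective; as
  L (L^m z) = 0 = L 0, we get L^m z = 0, i.e. L is injective on L^m(X).\<close>

lemma subgroup_free_Abelian_group_iff:
  "subgroup H (free_Abelian_group S) \<longleftrightarrow>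
     H \<subseteq> {c. Poly_Mapping.keys c \<subseteq> S} \<and> 0 \<in> H \<and> (\<forall>x\<in>H. \<forall>y\<in>H. x - y \<in> H)"
proof
  assume H: "subgroup H (free_Abelian_group S)"
  have "x - y \<in> H" if "x \<in> H" "y \<in> H" for x y
    using subgroup.m_closed[OF H that(1) subgroup.m_inv_closed[OF H that(2)]]
      subgroup.subset[OF H] that by auto
  then show "H \<subseteq> {c. Poly_Mapping.keys c \<subseteq> S} \<and> 0 \<in> H \<and> (\<forall>x\<in>H. \<forall>y\<in>H. x - y \<in> H)"
    using subgroup.subset[OF H] subgroup.one_closed[OF H] by force
next
  assume H: "H \<subseteq> {c. Poly_Mapping.keys c \<subseteq> S} \<and> 0 \<in> H \<and> (\<forall>x\<in>H. \<forall>y\<in>H. x - y \<in> H)"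
  then have "- x \<in> H" if "x \<in> H" for x
    using that by (metis diff_0)
  then show "subgroup H (free_Abelian_group S)"
    using H by (intro group.subgroupI) (auto simp: subset_iff, metis diff_minus_eq_add)
qed

lemma group_closure_subgroup_integer_group:
  assumes "subgroup I integer_group"
  shows "group_closure I = I"
proof
  show "group_closure I \<subseteq> I"
  proof
    fix s assume "s \<in> group_closure I"
    then show "s \<in> I"
    proof induction
      case (base s)
      then show ?case using subgroup.one_closed[OF assms] by auto
    next
      case (diff s t)
      then show ?case
        using subgroup.m_closed[OF assms diff(3) subgroup.m_inv_closed[OF assms diff(4)]] by simp
    qed
  qed
qed (auto intro: group_closure.base)

lemma integer_group_ascending_chain_stabilizes:
  assumes sub: "\<And>m. subgroup (I m) integer_group" and chain: "\<And>m. I m \<subseteq> I (Suc m)"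
  shows "\<exists>N. \<forall>m\<ge>N. I m = I N"
proof -
  define U where "U = (\<Union>m. I m)"
  have "\<exists>m. s \<in> I m" if "s \<in> group_closure U" for s
    using that
  proof induction
    case (base s)
    then show ?case
      using subgroup.one_closed[OF sub] U_def by auto
  next
    case (diff s t)
    then obtain i j where "s \<in> I i" "t \<in> I j" by blast
    then have "s \<in> I (max i j)" "t \<in> I (max i j)"
      using lift_Suc_mono_le[of I, OF chain, of _ "max i j"]
      by (meson max.cobounded1 max.cobounded2 subsetD)+
    then have "s - t \<in> I (max i j)"
      using group_closure.diff group_closure_subgroup_integer_group[OF sub] by metis
    then show ?case ..
  qed
  then obtain N where N: "Gcd U \<in> I N"
    using Gcd_in_group_closure by blast
  have "I m = I N" if "N \<le> m" for m
  proof
    show "I m \<subseteq> I N"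
    proof
      fix x assume "x \<in> I m"
      then have "Gcd U dvd x"
        using U_def by (auto intro: Gcd_dvd)
      then obtain c where "x = Gcd U * c" ..
      then show "x \<in> I N"
        using group_closure_mult_left[of "Gcd U" "I N" c] N
          group_closure_subgroup_integer_group[OF sub] by simp
    qed
  qed (use lift_Suc_mono_le[of I, OF chain that] in simp)
  then show ?thesis by blast
qed

lemma keys_diff_subset:
  "Poly_Mapping.keys x \<subseteq> T \<Longrightarrow> Poly_Mapping.keys y \<subseteq> T \<Longrightarrow> Poly_Mapping.keys (x - y) \<subseteq> T"
  using keys_diff[of x y] by blast

lemma subgroup_free_Abelian_group_restrict:
  assumes "subgroup H (free_Abelian_group S)"
  shows "subgroup (H \<inter> {c. Poly_Mapping.keys c \<subseteq> T}) (free_Abelian_group T)"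
  using assms keys_diff_subset unfolding subgroup_free_Abelian_group_iff by auto

lemma lookup_hom_integer_group:
  "(\<lambda>c. Poly_Mapping.lookup c a) \<in> hom (free_Abelian_group S) integer_group"
  by (rule homI) (auto simp: lookup_add)

lemma free_Abelian_group_ascending_chain_stabilizes:
  assumes "finite T"
    and "\<And>m. subgroup (A m) (free_Abelian_group T)" and "\<And>m. A m \<subseteq> A (Suc m)"
  shows "\<exists>N. \<forall>m\<ge>N. A m = A N"
  using assms
proof (induction T arbitrary: A rule: finite_induct)
  case empty
  have "A m = {0}" for m
    using empty.prems(1)[of m] unfolding subgroup_free_Abelian_group_iff by force
  then show ?case by blast
next
  case (insert a T)
  define B where "B m = A m \<inter> {c. Poly_Mapping.keys c \<subseteq> T}" for m
  define I where "I m = (\<lambda>c. Poly_Mapping.lookup c a) ` A m" for m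
  have "\<exists>N. \<forall>m\<ge>N. B m = B N"
  proof (rule insert.IH)
    show "subgroup (B m) (free_Abelian_group T)" for m
      unfolding B_def by (rule subgroup_free_Abelian_group_restrict[OF insert.prems(1)])
    show "B m \<subseteq> B (Suc m)" for m
      using insert.prems(2)[of m] unfolding B_def by blast
  qed
  then obtain N1 where N1: "\<And>m. N1 \<le> m \<Longrightarrow> B m = B N1" by blast
  have "\<exists>N. \<forall>m\<ge>N. I m = I N"
  proof (rule integer_group_ascending_chain_stabilizes)
    show "subgroup (I m) integer_group" for m
      unfolding I_def
    proof (rule group_hom.subgroup_img_is_subgroup)
      show "group_hom (free_Abelian_group (insert a T)) integer_group (\<lambda>c. Poly_Mapping.lookup c a)"
        by (simp add: group_hom_def group_hom_axioms_def lookup_hom_integer_group)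
    qed (rule insert.prems(1))
    show "I m \<subseteq> I (Suc m)" for m
      using insert.prems(2)[of m] unfolding I_def by blast
  qed
  then obtain N2 where N2: "\<And>m. N2 \<le> m \<Longrightarrow> I m = I N2" by blast
  define N where "N = max N1 N2"
  have "A m = A N" if "N \<le> m" for m
  proof
    show "A N \<subseteq> A m"
      using lift_Suc_mono_le[of A, OF insert.prems(2) that] .
    show "A m \<subseteq> A N"
    proof
      fix f assume f: "f \<in> A m"
      have "I m = I N"
        using N2[of m] N2[of N] that by (simp add: N_def)
      then obtain g where g: "g \<in> A N" "Poly_Mapping.lookup g a = Poly_Mapping.lookup f a"
        using f unfolding I_def by (metis (no_types, lifting) image_eqI imageE)
      have sub_m: "subgroup (A m) (free_Abelian_group (insert a T))"
        by (rule insert.prems(1))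
      have "f - g \<in> A m"
        using f g(1) \<open>A N \<subseteq> A m\<close> sub_m unfolding subgroup_free_Abelian_group_iff by blast
      moreover have "Poly_Mapping.keys (f - g) \<subseteq> T"
      proof -
        have "Poly_Mapping.keys (f - g) \<subseteq> insert a T"
          using \<open>f - g \<in> A m\<close> sub_m unfolding subgroup_free_Abelian_group_iff by blast
        moreover have "a \<notin> Poly_Mapping.keys (f - g)"
          using g(2) by (simp add: in_keys_iff lookup_minus)
        ultimately show ?thesis by blast
      qed
      ultimately have "f - g \<in> B m"
        unfolding B_def by blast
      also have "B m = B N"
        using N1[of m] N1[of N] that by (simp add: N_def)
      finally have "f - g \<in> A N"
        unfolding B_def by blast
      then have "(f - g) - (0 - g) \<in> A N"
        using g(1) insert.prems(1)[of N] unfolding subgroup_free_Abelian_group_iff by blast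
      then show "f \<in> A N" by simp
    qed
  qed
  then show ?case by blast
qed

lemma fg_subgroup_free_Abelian_group_finite_support:
  assumes "fg_subgroup (free_Abelian_group S) X"
  obtains T where "finite T" "X \<subseteq> {c. Poly_Mapping.keys c \<subseteq> T}"
proof -
  obtain F where F: "finite F" "F \<subseteq> carrier (free_Abelian_group S)"
    and X: "X = generate (free_Abelian_group S) F"
    using assms unfolding fg_subgroup_def by blast
  define T where "T = \<Union> (Poly_Mapping.keys ` F)"
  have "T \<subseteq> S"
    using F(2) by (auto simp: T_def subset_iff)
  then have "subgroup {c. Poly_Mapping.keys c \<subseteq> T} (free_Abelian_group S)"
    unfolding subgroup_free_Abelian_group_iff by (auto simp: keys_diff_subset)
  then have "X \<subseteq> {c. Poly_Mapping.keys c \<subseteq> T}"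
    unfolding X by (intro group.generate_subgroup_incl) (auto simp: T_def)
  moreover have "finite T"
    using F(1) by (simp add: T_def)
  ultimately show thesis using that by blast
qed

lemma fg_subgroup_ascending_chain_stabilizes:
  assumes "fg_subgroup (free_Abelian_group S) X"
    and "\<And>m. subgroup (A m) (free_Abelian_group S)" "\<And>m. A m \<subseteq> X" "\<And>m. A m \<subseteq> A (Suc m)"
  shows "\<exists>N. \<forall>m\<ge>N. A m = A N"
proof -
  obtain T where "finite T" "X \<subseteq> {c. Poly_Mapping.keys c \<subseteq> T}"
    using fg_subgroup_free_Abelian_group_finite_support[OF assms(1)] .
  then have "subgroup (A m) (free_Abelian_group T)" for m
    using subgroup_free_Abelian_group_restrict[OF assms(2), of m T] assms(3)[of m]
    by (simp add: Int_absorb2)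
  then show ?thesis
    using free_Abelian_group_ascending_chain_stabilizes[OF \<open>finite T\<close>] assms(4) by blast
qed

lemma funpow_hom: "h \<in> hom G G \<Longrightarrow> h ^^ n \<in> hom G G"
  by (induction n) (auto intro: hom_compose homI)

lemma (in group) group_hom_funpow: "L \<in> hom G G \<Longrightarrow> group_hom G G (L ^^ j)"
  using funpow_hom by (simp add: group_hom_def group_hom_axioms_def is_group)

lemma (in group_hom) subgroup_preimage:
  assumes "subgroup X G" "subgroup D H"
  shows "subgroup {x \<in> X. h x \<in> D} G"
  using assms by (intro G.subgroupI) (auto simp: subgroup.subset[THEN subsetD] subgroup.m_inv_closed
      subgroup.m_closed subgroup.one_closed intro!: exI[of _ \<one>])

lemma (in group) rcos_eq_iff:
  assumes "subgroup H G" "x \<in> carrier G" "y \<in> carrier G"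
  shows "H #> x = H #> y \<longleftrightarrow> x \<otimes> inv y \<in> H"
  using assms rcos_self[of x H] subgroup.rcos_module[OF assms(1) is_group] repr_independence
  by metis

lemma (in group_hom) rcos_hom_eq_iff:
  assumes "subgroup D H" "x \<in> carrier G" "y \<in> carrier G"
  shows "D #>\<^bsub>H\<^esub> h x = D #>\<^bsub>H\<^esub> h y \<longleftrightarrow> h (x \<otimes> inv y) \<in> D"
  using assms by (simp add: H.rcos_eq_iff)

lemma (in group) inj_on_induced_endomorphism_iff:
  assumes L: "L \<in> hom G G" and D: "subgroup D G" and X: "subgroup X G"
    and Lbar: "\<And>g. g \<in> carrier G \<Longrightarrow> Lbar (D #> g) = D #> L g"
  shows "inj_on Lbar ((Lbar ^^ m) ` (\<lambda>x. D #> x) ` X) \<longleftrightarrow>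
           {x \<in> X. (L ^^ Suc m) x \<in> D} \<subseteq> {x \<in> X. (L ^^ m) x \<in> D}"
proof -
  have X_carrier: "X \<subseteq> carrier G"
    using X by (rule subgroup.subset)
  have L_carrier: "x \<in> carrier G \<Longrightarrow> (L ^^ j) x \<in> carrier G" for x j
    using funpow_hom[OF L] by (rule hom_in_carrier)
  have Lbar_funpow: "(Lbar ^^ j) (D #> x) = D #> (L ^^ j) x" if "x \<in> carrier G" for x j
    by (induction j) (simp_all add: Lbar L_carrier that)
  have "(Lbar ^^ m) ` (\<lambda>x. D #> x) ` X = (\<lambda>x. D #> (L ^^ m) x) ` X"
    unfolding image_comp by (rule image_cong) (use X_carrier Lbar_funpow in auto)
  then have "inj_on Lbar ((Lbar ^^ m) ` (\<lambda>x. D #> x) ` X) \<longleftrightarrow>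
      (\<forall>x\<in>X. \<forall>y\<in>X. D #> (L ^^ Suc m) x = D #> (L ^^ Suc m) y \<longrightarrow> D #> (L ^^ m) x = D #> (L ^^ m) y)"
    using X_carrier by (auto simp: inj_on_def Lbar L_carrier subset_iff)
  also have "\<dots> \<longleftrightarrow> (\<forall>x\<in>X. \<forall>y\<in>X. (L ^^ Suc m) (x \<otimes> inv y) \<in> D \<longrightarrow> (L ^^ m) (x \<otimes> inv y) \<in> D)"
    using X_carrier by (auto simp: group_hom.rcos_hom_eq_iff[OF group_hom_funpow[OF L] D] subset_iff simp del: funpow.simps)
  also have "\<dots> \<longleftrightarrow> {x \<in> X. (L ^^ Suc m) x \<in> D} \<subseteq> {x \<in> X. (L ^^ m) x \<in> D}"
  proof
    assume "\<forall>x\<in>X. \<forall>y\<in>X. (L ^^ Suc m) (x \<otimes> inv y) \<in> D \<longrightarrow> (L ^^ m) (x \<otimes> inv y) \<in> D"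
    then show "{x \<in> X. (L ^^ Suc m) x \<in> D} \<subseteq> {x \<in> X. (L ^^ m) x \<in> D}"
      using X_carrier subgroup.one_closed[OF X] by (fastforce dest: bspec[of _ _ \<one>])
  qed (use subgroup.m_closed[OF X] subgroup.m_inv_closed[OF X] in blast)
  finally show ?thesis .
qed

lemma (in group) inj_on_funpow_image_if_stable:
  assumes L: "L \<in> hom G G" and D: "subgroup D G" "L ` D \<subseteq> D" and X: "subgroup X G"
    and inj: "inj_on L ((L ^^ k) ` D)"
    and stable: "\<And>j. n \<le> j \<Longrightarrow> {x \<in> X. (L ^^ Suc j) x \<in> D} \<subseteq> {x \<in> X. (L ^^ j) x \<in> D}"
    and m: "n + k \<le> m"
  shows "inj_on L ((L ^^ m) ` X)"
proof (rule inj_onI)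
  interpret L1: group_hom G G L
    using L by (simp add: group_hom_def group_hom_axioms_def is_group)
  interpret Lm: group_hom G G "L ^^ m"
    using L by (rule group_hom_funpow)
  interpret Lk: group_hom G G "L ^^ k"
    using L by (rule group_hom_funpow)
  have D_invariant: "(L ^^ j) d \<in> D" if "d \<in> D" for d j
    using that D(2) by (induction j) auto
  have descend: "(L ^^ n) z \<in> D" if "z \<in> X" "n \<le> j" "(L ^^ j) z \<in> D" for z j
    using that(2,3)
  proof (induction j rule: dec_induct)
    case (step i)
    then show ?case using stable[of i] \<open>z \<in> X\<close> by auto
  qed
  fix u v assume "u \<in> (L ^^ m) ` X" "v \<in> (L ^^ m) ` X" and uv: "L u = L v"
  then obtain x y where xy: "x \<in> X" "y \<in> X" "u = (L ^^ m) x" "v = (L ^^ m) y" by blast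
  define z where "z = x \<otimes> inv y"
  have z: "z \<in> X"
    using xy subgroup.m_closed[OF X] subgroup.m_inv_closed[OF X] z_def by auto
  have xy_carrier: "x \<in> carrier G" "y \<in> carrier G"
    using xy(1,2) subgroup.subset[OF X] by auto
  have Lmz: "L ((L ^^ m) z) = \<one>"
    using uv xy_carrier by (simp add: xy(3,4) z_def Lm.hom_inv L1.hom_inv)
  then have "(L ^^ n) z \<in> D"
    using descend[OF z, of "Suc m"] m subgroup.one_closed[OF D(1)] by simp
  then have "(L ^^ (m - k - n)) ((L ^^ n) z) \<in> D"
    by (rule D_invariant)
  moreover have "m - k = (m - k - n) + n" "m = k + (m - k)"
    using m by simp_all
  ultimately have "(L ^^ (m - k)) z \<in> D" "(L ^^ m) z = (L ^^ k) ((L ^^ (m - k)) z)"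
    by (metis funpow_add comp_apply)+
  then have "(L ^^ m) z \<in> (L ^^ k) ` D"
    by blast
  moreover have "\<one> \<in> (L ^^ k) ` D"
    using subgroup.one_closed[OF D(1)] Lk.hom_one by force
  moreover have "L ((L ^^ m) z) = L \<one>"
    using Lmz by simp
  ultimately have "(L ^^ m) z = \<one>"
    using inj by (blast dest: inj_onD)
  then have "(L ^^ m) x \<otimes> inv ((L ^^ m) y) = \<one>"
    using xy_carrier by (simp add: z_def Lm.hom_inv)
  then show "u = v"
    using xy_carrier by (simp add: xy(3,4) inv_solve_right')
qed

lemma bij_betw_funpow_image_iff:
  "bij_betw f ((f ^^ m) ` Y) ((f ^^ Suc m) ` Y) \<longleftrightarrow> inj_on f ((f ^^ m) ` Y)"
  by (simp add: bij_betw_def image_comp)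

lemma eta_eq_Least_inj_on: "eta f Y = (LEAST k. \<forall>m\<ge>k. inj_on f ((f ^^ m) ` Y))"
  unfolding eta_def bij_betw_funpow_image_iff ..

lemma eta_le:
  assumes "\<And>m. n \<le> m \<Longrightarrow> inj_on f ((f ^^ m) ` Y)"
  shows "eta f Y \<le> n"
  unfolding eta_eq_Least_inj_on by (rule Least_le) (use assms in blast)

lemma inj_on_funpow_image_if_eta_le:
  assumes "\<And>m. n \<le> m \<Longrightarrow> inj_on f ((f ^^ m) ` Y)" and "eta f Y \<le> m"
  shows "inj_on f ((f ^^ m) ` Y)"
proof -
  have "\<forall>m\<ge>eta f Y. inj_on f ((f ^^ m) ` Y)"
    unfolding eta_eq_Least_inj_on by (rule LeastI[of _ n]) (use assms(1) in blast)
  then show ?thesis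
    using assms(2) by blast
qed

theorem lemma3p3:
  fixes S :: "'a set" and D X :: "('a \<Rightarrow>\<^sub>0 int) set"
    and L :: "('a \<Rightarrow>\<^sub>0 int) \<Rightarrow> ('a \<Rightarrow>\<^sub>0 int)"
    and Lbar :: "('a \<Rightarrow>\<^sub>0 int) set \<Rightarrow> ('a \<Rightarrow>\<^sub>0 int) set"
    and k :: nat
  defines "G \<equiv> free_Abelian_group S"
  assumes D: "subgroup D G"
    and L: "L \<in> hom G G"
    and LD: "L ` D \<subseteq> D"
    and k: "k > 0"
    and mono: "inj_on L ((L ^^ k) ` D)" "L ` ((L ^^ k) ` D) \<subseteq> D"
    and Lbar: "\<And>g. g \<in> carrier G \<Longrightarrow> Lbar (r_coset G D g) = r_coset G D (L g)"
    and X: "fg_subgroup G X"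
  shows "eta L X \<le> eta Lbar ((\<lambda>x. r_coset G D x) ` X) + k"
proof -
  interpret group G
    unfolding G_def by simp
  have X_subgroup: "subgroup X G"
    using X by (simp add: fg_subgroup_def)
  define K where "K m = {x \<in> X. (L ^^ m) x \<in> D}" for m
  have "subgroup (K m) G" for m
    unfolding K_def using group_hom.subgroup_preimage[OF group_hom_funpow[OF L] X_subgroup D] .
  moreover have "K m \<subseteq> K (Suc m)" for m
    using LD by (auto simp: K_def)
  ultimately obtain N where N: "\<And>m. N \<le> m \<Longrightarrow> K m = K N"
    using fg_subgroup_ascending_chain_stabilizes[of S X K] X unfolding G_def K_def by blast
  let ?n = "eta Lbar ((\<lambda>x. r_coset G D x) ` X)"
  have "inj_on Lbar ((Lbar ^^ m) ` (\<lambda>x. r_coset G D x) ` X)" if "N \<le> m" for m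
    using N[of m] N[of "Suc m"] that
    by (simp add: inj_on_induced_endomorphism_iff[OF L D X_subgroup Lbar] K_def)
  then have "inj_on Lbar ((Lbar ^^ j) ` (\<lambda>x. r_coset G D x) ` X)" if "?n \<le> j" for j
    using that by (rule inj_on_funpow_image_if_eta_le)
  then have "K (Suc j) \<subseteq> K j" if "?n \<le> j" for j
    using that unfolding K_def by (simp only: inj_on_induced_endomorphism_iff[OF L D X_subgroup Lbar])
  then have "inj_on L ((L ^^ m) ` X)" if "?n + k \<le> m" for m
    using inj_on_funpow_image_if_stable[OF L D LD X_subgroup mono(1) _ that] unfolding K_def by blast
  then show ?thesis
    by (rule eta_le)
qed

end
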